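(* Let $f_0,f_1$ be real polynomials with $f_1\neq0$ and $\deg f_1<\deg f_0$, and let $R=f_1/f_0$. Run the modified Euclidean algorithm $f_{k-1}=d_kf_k-f_{k+1}$ with $\deg f_{k+1}<\deg f_k$ for $k=1,\dots,m$, where $f_{m+1}=0$ (so $d_1,\dots,d_m$ are real polynomials and $$-R=-\cfrac{1}{d_1-\cfrac{1}{d_2-\cfrac{1}{\ddots-\cfrac{1}{d_m}}}}\ ).$$ Then $$\operatorname{Ind}_{\mathbb{P}\mathbb{R}}(R)=-\sum_{k=1}^m\operatorname{Ind}_\infty(d_k).$$
   Context: For a real rational function $R$ and a real pole $\omega_0$ of $R$ of odd order, $\operatorname{Ind}_{\omega_0}(R)=+1$ if $R(\omega_0-0)<0<R(\omega_0+0)$ and $-1$ if $R(\omega_0-0)>0>R(\omega_0+0)$; $\operatorname{Ind}_{-\infty}^{+\infty}(R)$ is the sum of these over all real poles of $R$ of odd order. Writing $R=f_1/f_0$, $R$ has a pole at $\infty$ of order $\deg f_1-\deg f_0$ when positive; if this order is odd, $\operatorname{Ind}_\infty(R)=+1$ if $R(+\infty)<0<R(-\infty)$ and $-1$ if $R(+\infty)>0>R(-\infty)$; otherwise $0$. $\operatorname{Ind}_{\mathbb{P}\mathbb{R}}(R)=\operatorname{Ind}_{-\infty}^{+\infty}(R)+\operatorname{Ind}_\infty(R)$. For a polynomial $d(\omega)=c\omega^\nu+\dots$: $\operatorname{Ind}_\infty(d)=-\operatorname{sign}c$ if $\nu$ is odd and $0$ if $\nu$ is even. *)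

theory Defs
  imports "HOL-Computational_Algebra.Polynomial" Complex_Main
begin

definition rat_fun :: "real poly \<Rightarrow> real poly \<Rightarrow> real \<Rightarrow> real" where
  "rat_fun p q = (\<lambda>t. poly p t / poly q t)"

definition pole_order :: "real poly \<Rightarrow> real poly \<Rightarrow> real \<Rightarrow> int" where
  "pole_order p q x = int (order x q) - int (order x p)"

definition ind_at :: "real poly \<Rightarrow> real poly \<Rightarrow> real \<Rightarrow> int" where
  "ind_at p q x =
     (if pole_order p q x > 0 \<and> odd (pole_order p q x) then
        (if (\<forall>\<^sub>F t in at_left x. rat_fun p q t < 0) \<and> (\<forall>\<^sub>F t in at_right x. rat_fun p q t > 0) then 1
         else if (\<forall>\<^sub>F t in at_left x. rat_fun p q t > 0) \<and> (\<forall>\<^sub>F t in at_right x. rat_fun p q t < 0) then -1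
         else 0)
      else 0)"

text \<open>Ind from -infinity to +infinity: sum over the real poles of odd order
  (all poles are among the roots of q; non-poles contribute 0).\<close>
definition ind_real :: "real poly \<Rightarrow> real poly \<Rightarrow> int" where
  "ind_real p q = (\<Sum>x\<in>{x. poly q x = 0}. ind_at p q x)"

definition ind_infty :: "real poly \<Rightarrow> real poly \<Rightarrow> int" where
  "ind_infty p q =
     (let n = int (degree p) - int (degree q) in
      if n > 0 \<and> odd n then
        (if (\<forall>\<^sub>F t in at_top. rat_fun p q t < 0) \<and> (\<forall>\<^sub>F t in at_bot. rat_fun p q t > 0) then 1
         else if (\<forall>\<^sub>F t in at_top. rat_fun p q t > 0) \<and> (\<forall>\<^sub>F t in at_bot. rat_fun p q t < 0) then -1
         else 0)
      else 0)"

definition ind_PR :: "real poly \<Rightarrow> real poly \<Rightarrow> int" where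
  "ind_PR p q = ind_real p q + ind_infty p q"

definition ind_infty_poly :: "real poly \<Rightarrow> int" where
  "ind_infty_poly d = ind_infty d 1"

end

theory Submission
  imports Defs
begin

text \<open>For nonzero real polynomials \<open>p\<close>, \<open>q\<close> and every real \<open>x\<close>,
  \<open>Ind_x(p/q) + Ind_x(q/p)\<close> is half the jump of the sign of \<open>pq\<close> at \<open>x\<close>. Summing over \<open>x\<close>, the
  jumps telescope to half the difference of the signs of \<open>pq\<close> at \<open>+\<infinity>\<close> and \<open>-\<infinity>\<close>, which depends
  only on the sign of the leading coefficient and the parity of the degree of \<open>pq\<close>. Moreover
  \<open>Ind_x((dq - r)/q) = - Ind_x(r/q)\<close>. In a Euclidean step \<open>f(k-1) = d(k) f(k) - f(k+1)\<close> the
  product \<open>f(k) f(k-1)\<close> has, up to the square of a leading coefficient, the leading coefficient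
  and the degree parity of \<open>d(k)\<close>; hence \<open>Ind(f(k)/f(k-1)) = - Ind_\<infinity>(d(k)) + Ind(f(k+1)/f(k))\<close>,
  and the theorem follows by telescoping, as \<open>Ind_\<infinity>(f(1)/f(0)) = 0\<close> when \<open>deg f(1) < deg f(0)\<close>.\<close>

definition sign :: "real \<Rightarrow> int" where
  "sign u = (if u > 0 then 1 else if u < 0 then -1 else 0)"

lemma sign_mult: "sign (u * v) = sign u * sign v"
  by (auto simp: sign_def mult_less_0_iff zero_less_mult_iff)

lemma sign_divide: "sign (u / v) = sign u * sign v"
  by (auto simp: sign_def divide_less_0_iff zero_less_divide_iff)

lemma sign_uminus: "sign (- u) = - sign u"
  by (auto simp: sign_def)

lemma sign_power: "sign (u ^ n) = sign u ^ n"
  by (induction n) (simp_all add: sign_mult, simp add: sign_def)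

lemma sign_1 [simp]: "sign 1 = 1"
  by (simp add: sign_def)

lemma sign_pos: "u > 0 \<Longrightarrow> sign u = 1"
  by (simp add: sign_def)

lemma sign_neg: "u < 0 \<Longrightarrow> sign u = -1"
  by (simp add: sign_def)

lemma sign_cases: "u \<noteq> 0 \<Longrightarrow> sign u = 1 \<or> sign u = -1"
  by (auto simp: sign_def)

lemma
  fixes f :: "'a \<Rightarrow> real"
  assumes "F \<noteq> bot" and "eventually (\<lambda>t. sign (f t) = s) F"
  shows eventually_pos_iff_sign: "eventually (\<lambda>t. f t > 0) F \<longleftrightarrow> s = 1"
    and eventually_neg_iff_sign: "eventually (\<lambda>t. f t < 0) F \<longleftrightarrow> s = -1"
proof -
  have "eventually (\<lambda>t. f t > 0) F \<longleftrightarrow> eventually (\<lambda>t. s = 1) F"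
    using assms(2) by (rule eventually_subst[OF eventually_mono]) (auto simp: sign_def split: if_splits)
  then show "eventually (\<lambda>t. f t > 0) F \<longleftrightarrow> s = 1"
    using assms(1) by (simp add: eventually_const_iff)
  have "eventually (\<lambda>t. f t < 0) F \<longleftrightarrow> eventually (\<lambda>t. s = -1) F"
    using assms(2) by (rule eventually_subst[OF eventually_mono]) (auto simp: sign_def split: if_splits)
  then show "eventually (\<lambda>t. f t < 0) F \<longleftrightarrow> s = -1"
    using assms(1) by (simp add: eventually_const_iff)
qed

lemma eventually_sign_poly_at_top:
  fixes p :: "real poly"
  assumes "p \<noteq> 0"
  shows "eventually (\<lambda>t. sign (poly p t) = sign (lead_coeff p)) at_top"
proof -
  have "lead_coeff (smult (lead_coeff p) p) > 0"
    using assms by (metis lead_coeff_smult leading_coeff_0_iff not_real_square_gt_zero)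
  then obtain n where "\<forall>t\<ge>n. lead_coeff p * poly p t > 0"
    using poly_pinfty_gt_lc[of "smult (lead_coeff p) p"] by force
  then show ?thesis
    unfolding eventually_at_top_linorder
    by (intro exI[of _ n]) (auto simp: sign_def zero_less_mult_iff)
qed

lemma eventually_sign_poly_at_bot:
  fixes p :: "real poly"
  assumes "p \<noteq> 0"
  shows "eventually (\<lambda>t. sign (poly p t) = (-1) ^ degree p * sign (lead_coeff p)) at_bot"
proof -
  let ?q = "pcompose p [:0, -1:]"
  have lc: "lead_coeff ?q = (-1) ^ degree p * lead_coeff p"
    by (subst lead_coeff_comp) auto
  then have "?q \<noteq> 0"
    using assms by auto
  from eventually_sign_poly_at_top[OF this] show ?thesis
    unfolding at_bot_mirror eventually_filtermap lc
    by (simp add: poly_pcompose sign_mult sign_power sign_uminus)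
qed

lemma sign_poly_eq_if_no_root_between:
  fixes p :: "real poly"
  assumes "a \<le> b" and "\<forall>x\<in>{a..b}. poly p x \<noteq> 0"
  shows "sign (poly p a) = sign (poly p b)"
proof (rule ccontr)
  assume "sign (poly p a) \<noteq> sign (poly p b)"
  moreover have "poly p a \<noteq> 0" "poly p b \<noteq> 0"
    using assms by auto
  ultimately have "a \<noteq> b" "poly p a * poly p b < 0"
    by (auto simp: sign_def mult_less_0_iff split: if_splits)
  then show False
    using poly_IVT[of a b p] assms by force
qed

lemma sign_poly_eq_lead_coeff_if_no_root_above:
  fixes p :: "real poly"
  assumes "\<forall>x\<ge>c. poly p x \<noteq> 0"
  shows "sign (poly p c) = sign (lead_coeff p)"
proof -
  have "p \<noteq> 0"
    using assms by auto
  from eventually_sign_poly_at_top[OF this] obtain n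
    where "\<forall>t\<ge>n. sign (poly p t) = sign (lead_coeff p)"
    unfolding eventually_at_top_linorder by blast
  then show ?thesis
    using sign_poly_eq_if_no_root_between[of c "max c n" p] assms by simp
qed

lemma sign_poly_eq_lead_coeff_if_no_root_below:
  fixes p :: "real poly"
  assumes "\<forall>x\<le>c. poly p x \<noteq> 0"
  shows "sign (poly p c) = (-1) ^ degree p * sign (lead_coeff p)"
proof -
  have "p \<noteq> 0"
    using assms by auto
  from eventually_sign_poly_at_bot[OF this] obtain n
    where "\<forall>t\<le>n. sign (poly p t) = (-1) ^ degree p * sign (lead_coeff p)"
    unfolding eventually_at_bot_linorder by blast
  then show ?thesis
    using sign_poly_eq_if_no_root_between[of "min c n" c p] assms by simp
qed

lemma eventually_sign_poly_at:
  fixes g :: "real poly"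
  assumes "poly g x \<noteq> 0"
  shows "eventually (\<lambda>t. sign (poly g t) = sign (poly g x)) (at x)"
proof -
  have "((\<lambda>t. poly g t * poly g x) \<longlongrightarrow> poly g x * poly g x) (at x)"
    by (intro tendsto_intros poly_isCont[unfolded isCont_def])
  then have "eventually (\<lambda>t. poly g t * poly g x > 0) (at x)"
    by (rule order_tendstoD(1)) (use assms not_real_square_gt_zero in blast)
  then show ?thesis
    by eventually_elim (auto simp: sign_def zero_less_mult_iff)
qed

lemma
  fixes g :: "real poly"
  assumes "poly g x \<noteq> 0"
  shows eventually_sign_linear_power_mult_at_right:
      "eventually (\<lambda>t. sign (poly ([:-x, 1:] ^ a * g) t) = sign (poly g x)) (at_right x)"
    and eventually_sign_linear_power_mult_at_left:
      "eventually (\<lambda>t. sign (poly ([:-x, 1:] ^ a * g) t) = (-1) ^ a * sign (poly g x)) (at_left x)"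
proof -
  have g: "eventually (\<lambda>t. sign (poly g t) = sign (poly g x)) (at_right x)"
    "eventually (\<lambda>t. sign (poly g t) = sign (poly g x)) (at_left x)"
    using eventually_sign_poly_at[OF assms] by (simp_all add: eventually_at_split)
  have "eventually (\<lambda>t. t > x) (at_right x)" "eventually (\<lambda>t. t < x) (at_left x)"
    by (simp_all add: eventually_at_filter)
  show "eventually (\<lambda>t. sign (poly ([:-x, 1:] ^ a * g) t) = sign (poly g x)) (at_right x)"
    using g(1) \<open>eventually (\<lambda>t. t > x) (at_right x)\<close>
    by eventually_elim (simp add: sign_mult sign_power sign_pos)
  show "eventually (\<lambda>t. sign (poly ([:-x, 1:] ^ a * g) t) = (-1) ^ a * sign (poly g x)) (at_left x)"
    using g(2) \<open>eventually (\<lambda>t. t < x) (at_left x)\<close>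
    by eventually_elim (simp add: sign_mult sign_power sign_neg)
qed

lemma order_linear_power_mult:
  fixes g :: "real poly"
  assumes "poly g x \<noteq> 0"
  shows "order x ([:-x, 1:] ^ a * g) = a"
proof -
  have "g \<noteq> 0"
    using assms by auto
  then show ?thesis
    by (subst order_mult) (auto simp: order_power_n_n order_0I[OF assms])
qed

lemma order_decomp_nonroot:
  fixes r :: "real poly"
  assumes "r \<noteq> 0"
  obtains g where "r = [:-x, 1:] ^ order x r * g" and "poly g x \<noteq> 0"
  using order_decomp[OF assms, of x] by (auto simp: poly_eq_0_iff_dvd)

lemma ind_at_0: "ind_at 0 q x = 0"
  by (simp add: ind_at_def rat_fun_def eventually_const_iff)

lemma ind_at_eq_0_if_dvd:
  assumes "[:-x, 1:] ^ order x q dvd p"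
  shows "ind_at p q x = 0"
proof (cases "p = 0")
  case False
  then have "order x q \<le> order x p"
    using assms by (simp add: order_divides)
  then show ?thesis
    by (simp add: ind_at_def pole_order_def)
qed (simp add: ind_at_0)

lemma ind_at_eq_sign_change:
  assumes "pole_order p q x > 0" and "odd (pole_order p q x)" and "s = 1 \<or> s = -1"
    and "eventually (\<lambda>t. sign (rat_fun p q t) = - s) (at_left x)"
    and "eventually (\<lambda>t. sign (rat_fun p q t) = s) (at_right x)"
  shows "ind_at p q x = s"
  using assms eventually_pos_iff_sign[of "at_left x"] eventually_neg_iff_sign[of "at_left x"]
    eventually_pos_iff_sign[of "at_right x"] eventually_neg_iff_sign[of "at_right x"]
  by (auto simp: ind_at_def)

lemma ind_at_decomp:
  fixes g h :: "real poly"
  assumes p: "p = [:-x, 1:] ^ a * g" and q: "q = [:-x, 1:] ^ b * h"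
    and g: "poly g x \<noteq> 0" and h: "poly h x \<noteq> 0"
  shows "ind_at p q x = (if a < b \<and> odd (b - a) then sign (poly g x * poly h x) else 0)"
proof -
  have order: "pole_order p q x = int b - int a"
    by (simp add: pole_order_def p q order_linear_power_mult g h)
  have pole: "pole_order p q x > 0 \<and> odd (pole_order p q x) \<longleftrightarrow> a < b \<and> odd (b - a)"
  proof (cases "a < b")
    case True
    then have "pole_order p q x = int (b - a)"
      by (simp add: order)
    then show ?thesis
      using True by simp
  qed (simp add: order)
  show ?thesis
  proof (cases "a < b \<and> odd (b - a)")
    case True
    have "(-1) ^ a * (-1) ^ b = (-1 :: int)"
    proof -
      have "a + b = 2 * a + (b - a)"
        using True by simp
      then show ?thesis
        using True by (simp add: power_add[symmetric] power_mult)
    qed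
    then have odd_sign: "(-1) ^ a * u * ((-1) ^ b * v) = - (u * v)" for u v :: int
      by (metis mult.assoc mult.left_commute mult_minus_left mult_1)
    have rat: "sign (rat_fun p q t) = sign (poly p t) * sign (poly q t)" for t
      by (simp add: rat_fun_def sign_divide)
    have "eventually (\<lambda>t. sign (rat_fun p q t) = - sign (poly g x * poly h x)) (at_left x)"
      using eventually_sign_linear_power_mult_at_left[OF g, of a]
        eventually_sign_linear_power_mult_at_left[OF h, of b]
      unfolding p[symmetric] q[symmetric]
      by eventually_elim (simp add: rat sign_mult odd_sign)
    moreover have "eventually (\<lambda>t. sign (rat_fun p q t) = sign (poly g x * poly h x)) (at_right x)"
      using eventually_sign_linear_power_mult_at_right[OF g, of a]
        eventually_sign_linear_power_mult_at_right[OF h, of b]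
      unfolding p[symmetric] q[symmetric] by eventually_elim (simp add: rat sign_mult)
    ultimately show ?thesis
      using True pole g h by (simp add: ind_at_eq_sign_change sign_cases)
  next
    case False
    then have "\<not> (pole_order p q x > 0 \<and> odd (pole_order p q x))"
      using pole by blast
    then show ?thesis
      using False unfolding ind_at_def by (simp only: if_False)
  qed
qed

text \<open>Half the jump of the sign of \<open>r\<close> at \<open>x\<close>, i.e. \<open>(sgn r(x+) - sgn r(x-)) / 2\<close>.\<close>

definition sign_jump :: "real poly \<Rightarrow> real \<Rightarrow> int" where
  "sign_jump r x =
     (if odd (order x r) then sign (poly (r div [:-x, 1:] ^ order x r) x) else 0)"

lemma sign_jump_decomp:
  fixes g :: "real poly"
  assumes r: "r = [:-x, 1:] ^ a * g" and g: "poly g x \<noteq> 0"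
  shows "sign_jump r x = (if odd a then sign (poly g x) else 0)"
proof -
  have "order x r = a"
    using r order_linear_power_mult[OF g] by simp
  moreover have "r div [:-x, 1:] ^ a = g"
    unfolding r by (rule nonzero_mult_div_cancel_left) simp
  ultimately show ?thesis
    by (simp add: sign_jump_def)
qed

lemma ind_at_add_swap:
  fixes p q :: "real poly"
  assumes "p \<noteq> 0" and "q \<noteq> 0"
  shows "ind_at p q x + ind_at q p x = sign_jump (p * q) x"
proof -
  obtain g where g: "p = [:-x, 1:] ^ order x p * g" "poly g x \<noteq> 0"
    using order_decomp_nonroot[OF assms(1)] .
  obtain h where h: "q = [:-x, 1:] ^ order x q * h" "poly h x \<noteq> 0"
    using order_decomp_nonroot[OF assms(2)] .
  have "p * q = [:-x, 1:] ^ (order x p + order x q) * (g * h)"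
    by (subst g(1), subst h(1)) (simp add: power_add mult_ac)
  from sign_jump_decomp[OF this] g(2) h(2)
  have "sign_jump (p * q) x = (if odd (order x p + order x q) then sign (poly g x * poly h x) else 0)"
    by simp
  with ind_at_decomp[OF g(1) h(1) g(2) h(2)] ind_at_decomp[OF h(1) g(1) h(2) g(2)]
  show ?thesis
    by (cases "order x p" "order x q" rule: linorder_cases) (auto simp: mult.commute)
qed

lemma ind_at_mult_diff:
  fixes q d r :: "real poly"
  assumes "q \<noteq> 0"
  shows "ind_at (d * q - r) q x = - ind_at r q x"
proof (cases "r \<noteq> 0 \<and> order x r < order x q")
  case True
  \<comment> \<open>\<open>q\<close> vanishes to higher order than \<open>r\<close> at \<open>x\<close>, so \<open>dq - r\<close> behaves like \<open>-r\<close> there\<close>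
  define a b where "a = order x r" and "b = order x q"
  obtain g where g: "r = [:-x, 1:] ^ a * g" "poly g x \<noteq> 0"
    using order_decomp_nonroot[of r x] True unfolding a_def by blast
  obtain h where h: "q = [:-x, 1:] ^ b * h" "poly h x \<noteq> 0"
    using order_decomp_nonroot[OF assms] unfolding b_def by blast
  have "a < b"
    using True by (simp add: a_def b_def)
  define k where "k = d * [:-x, 1:] ^ (b - a) * h - g"
  have dqr: "d * q - r = [:-x, 1:] ^ a * k"
  proof -
    have "q = [:-x, 1:] ^ a * ([:-x, 1:] ^ (b - a) * h)"
      using h(1) \<open>a < b\<close> by (simp add: mult.assoc[symmetric] power_add[symmetric])
    then show ?thesis
      using g(1) by (simp add: k_def algebra_simps)
  qed
  have k: "poly k x = - poly g x"
    using \<open>a < b\<close> by (simp add: k_def)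
  then have "poly k x \<noteq> 0"
    using g(2) by simp
  from ind_at_decomp[OF dqr h(1) this h(2)] ind_at_decomp[OF g(1) h(1) g(2) h(2)]
  show ?thesis
    by (simp add: k sign_mult sign_uminus)
next
  case False
  then have "[:-x, 1:] ^ order x q dvd r"
    by (auto simp: order_divides)
  moreover have "[:-x, 1:] ^ order x q dvd d * q"
    by (simp add: order_1)
  ultimately show ?thesis
    by (simp add: ind_at_eq_0_if_dvd)
qed

lemma ind_real_0: "ind_real 0 q = 0"
  by (simp add: ind_real_def ind_at_0)

lemma ind_real_eq_sum_superset:
  fixes p q :: "real poly"
  assumes "finite S" and "{x. poly q x = 0} \<subseteq> S"
  shows "ind_real p q = (\<Sum>x\<in>S. ind_at p q x)"
  unfolding ind_real_def
proof (rule sum.mono_neutral_left[OF assms])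
  show "\<forall>x\<in>S - {x. poly q x = 0}. ind_at p q x = 0"
    by (auto intro: ind_at_eq_0_if_dvd simp: order_0I)
qed

lemma ind_real_mult_diff:
  fixes q d r :: "real poly"
  assumes "q \<noteq> 0"
  shows "ind_real (d * q - r) q = - ind_real r q"
  by (simp add: ind_real_def ind_at_mult_diff[OF assms] sum_negf)

lemma ind_real_add_swap:
  fixes p q :: "real poly"
  assumes "p \<noteq> 0" and "q \<noteq> 0"
  shows "ind_real p q + ind_real q p = (\<Sum>x\<in>{x. poly (p * q) x = 0}. sign_jump (p * q) x)"
proof -
  let ?Z = "{x. poly (p * q) x = 0}"
  have "finite ?Z"
    using assms by (simp add: poly_roots_finite)
  then have "ind_real p q = (\<Sum>x\<in>?Z. ind_at p q x)" "ind_real q p = (\<Sum>x\<in>?Z. ind_at q p x)"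
    by (auto intro: ind_real_eq_sum_superset)
  then show ?thesis
    by (simp add: sum.distrib[symmetric] ind_at_add_swap[OF assms])
qed

lemma sign_jump_linear_mult_other:
  fixes s :: "real poly"
  assumes "s \<noteq> 0" and "x \<noteq> c"
  shows "sign_jump ([:-c, 1:] * s) x = sign (x - c) * sign_jump s x"
proof -
  obtain h where h: "s = [:-x, 1:] ^ order x s * h" "poly h x \<noteq> 0"
    using order_decomp_nonroot[OF assms(1)] .
  have "[:-c, 1:] * s = [:-x, 1:] ^ order x s * ([:-c, 1:] * h)"
    using h(1) by (metis mult.left_commute)
  moreover have hc: "poly ([:-c, 1:] * h) x = (x - c) * poly h x"
    by (simp add: algebra_simps)
  moreover have "poly ([:-c, 1:] * h) x \<noteq> 0"
    using h(2) assms(2) by (simp add: hc)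
  ultimately show ?thesis
    using sign_jump_decomp[OF h] by (simp add: sign_jump_decomp sign_mult)
qed

lemma sign_jump_linear_mult_at_largest_root:
  fixes s :: "real poly"
  assumes "s \<noteq> 0" and no_root: "\<forall>x>c. poly s x \<noteq> 0"
  shows "sign_jump ([:-c, 1:] * s) c + sign_jump s c = sign (lead_coeff s)"
proof -
  obtain g where g: "s = [:-c, 1:] ^ order c s * g" "poly g c \<noteq> 0"
    using order_decomp_nonroot[OF assms(1)] .
  have "[:-c, 1:] * s = [:-c, 1:] ^ Suc (order c s) * g"
    by (subst g(1)) (simp only: power_Suc mult.assoc)
  from sign_jump_decomp[OF this g(2)] sign_jump_decomp[OF g]
  have "sign_jump ([:-c, 1:] * s) c + sign_jump s c = sign (poly g c)"
    by simp
  also have "\<dots> = sign (lead_coeff g)"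
  proof (rule sign_poly_eq_lead_coeff_if_no_root_above, intro allI impI)
    fix x :: real
    assume "c \<le> x"
    show "poly g x \<noteq> 0"
    proof (cases "x = c")
      case False
      then have "poly s x \<noteq> 0"
        using no_root \<open>c \<le> x\<close> by simp
      then show ?thesis
        by (subst (asm) g(1)) simp
    qed (use g(2) in simp)
  qed
  also have "lead_coeff g = lead_coeff s"
    using arg_cong[OF g(1), of lead_coeff] by (simp add: lead_coeff_mult lead_coeff_power)
  finally show ?thesis .
qed

lemma sum_sign_jump_linear_mult:
  fixes s :: "real poly"
  assumes "s \<noteq> 0" and no_root: "\<forall>x>c. poly s x \<noteq> 0"
  shows "(\<Sum>x\<in>{x. poly ([:-c, 1:] * s) x = 0}. sign_jump ([:-c, 1:] * s) x)
           = sign (lead_coeff s) - (\<Sum>x\<in>{x. poly s x = 0}. sign_jump s x)"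
proof -
  define r where "r = [:-c, 1:] * s"
  let ?T = "{x. poly r x = 0}"
  have T: "?T = insert c {x. poly s x = 0}" and "finite ?T"
    using assms(1) by (auto simp: r_def poly_roots_finite)
  have "(\<Sum>x\<in>{x. poly s x = 0}. sign_jump s x) = (\<Sum>x\<in>?T. sign_jump s x)"
    unfolding T by (rule sum.mono_neutral_left) (auto simp: sign_jump_def order_0I poly_roots_finite assms(1))
  moreover have "(\<Sum>x\<in>?T. sign_jump r x + sign_jump s x) = sign (lead_coeff s)"
  proof -
    have "sign_jump r x + sign_jump s x = 0" if "x \<in> ?T - {c}" for x
    proof -
      have "poly s x = 0" "x \<noteq> c"
        using that by (auto simp: T)
      with no_root have "x < c"
        by (meson not_less_iff_gr_or_eq)
      then show ?thesis
        unfolding r_def by (subst sign_jump_linear_mult_other[OF assms(1)]) (simp_all add: sign_neg)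
    qed
    then have "(\<Sum>x\<in>?T - {c}. sign_jump r x + sign_jump s x) = 0"
      by (rule sum.neutral[rule_format])
    moreover have "c \<in> ?T"
      by (simp add: T)
    moreover have "sign_jump r c + sign_jump s c = sign (lead_coeff s)"
      unfolding r_def by (rule sign_jump_linear_mult_at_largest_root[OF assms])
    ultimately show ?thesis
      using \<open>finite ?T\<close> by (simp add: sum.remove[of ?T c])
  qed
  ultimately show ?thesis
    unfolding r_def[symmetric] by (simp add: sum.distrib)
qed

lemma sum_sign_jump:
  fixes r :: "real poly"
  assumes "r \<noteq> 0"
  shows "2 * (\<Sum>x\<in>{x. poly r x = 0}. sign_jump r x) = sign (lead_coeff r) * (1 - (-1) ^ degree r)"
  using assms
proof (induction "degree r" arbitrary: r rule: less_induct)
  case less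
  show ?case
  proof (cases "\<exists>x. poly r x = 0")
    case False
    then have "sign (poly r 0) = sign (lead_coeff r)"
      and "sign (poly r 0) = (-1) ^ degree r * sign (lead_coeff r)"
      by (auto intro: sign_poly_eq_lead_coeff_if_no_root_above
          sign_poly_eq_lead_coeff_if_no_root_below)
    moreover have "sign (lead_coeff r) \<noteq> 0"
      using less.prems by (simp add: sign_def)
    ultimately have "(-1) ^ degree r = (1 :: int)"
      by (metis mult_cancel_right1)
    moreover have "{x. poly r x = 0} = {}"
      using False by simp
    ultimately show ?thesis
      by simp
  next
    case True
    let ?Z = "{x. poly r x = 0}"
    define c where "c = Max ?Z"
    have "finite ?Z"
      using less.prems by (rule poly_roots_finite)
    moreover have "?Z \<noteq> {}"
      using True by simp
    ultimately have "c \<in> ?Z"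
      unfolding c_def by (rule Max_in)
    have c_max: "\<forall>x>c. poly r x \<noteq> 0"
      unfolding c_def using Max_ge[OF \<open>finite ?Z\<close>] by (auto dest: leD)
    from \<open>c \<in> ?Z\<close> have "[:-c, 1:] dvd r"
      by (simp add: poly_eq_0_iff_dvd)
    then obtain s where r: "r = [:-c, 1:] * s"
      by (elim dvdE)
    have "s \<noteq> 0"
      using less.prems r by auto
    have "\<forall>x>c. poly s x \<noteq> 0"
      using c_max by (simp add: r)
    then have "(\<Sum>x\<in>?Z. sign_jump r x) = sign (lead_coeff s) - (\<Sum>x\<in>{x. poly s x = 0}. sign_jump s x)"
      unfolding r by (rule sum_sign_jump_linear_mult[OF \<open>s \<noteq> 0\<close>])
    moreover have "degree r = Suc (degree s)"
      unfolding r using \<open>s \<noteq> 0\<close> by (subst degree_mult_eq) auto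
    moreover have "lead_coeff r = lead_coeff s"
      unfolding r lead_coeff_mult by simp
    moreover note less.hyps[of s] \<open>s \<noteq> 0\<close>
    ultimately show ?thesis
      by (simp add: algebra_simps)
  qed
qed

lemma ind_infty_poly_eq:
  fixes d :: "real poly"
  shows "ind_infty_poly d = (if odd (degree d) then - sign (lead_coeff d) else 0)"
proof (cases "odd (degree d)")
  case True
  then have "d \<noteq> 0"
    by auto
  note top = eventually_sign_poly_at_top[OF this]
  have bot: "eventually (\<lambda>t. sign (poly d t) = - sign (lead_coeff d)) at_bot"
    using eventually_sign_poly_at_bot[OF \<open>d \<noteq> 0\<close>] True by simp
  have "rat_fun d 1 = poly d"
    by (simp add: rat_fun_def fun_eq_iff)
  then show ?thesis
    using True sign_cases[of "lead_coeff d"] \<open>d \<noteq> 0\<close>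
      eventually_pos_iff_sign[OF _ top] eventually_neg_iff_sign[OF _ top]
      eventually_pos_iff_sign[OF _ bot] eventually_neg_iff_sign[OF _ bot]
    by (auto simp: ind_infty_poly_def ind_infty_def Let_def)
qed (simp add: ind_infty_poly_def ind_infty_def Let_def)

lemma
  fixes p r :: "'a::comm_ring_1 poly"
  assumes "r = 0 \<or> degree r < degree p"
  shows degree_diff_eq_left: "degree (p - r) = degree p"
    and lead_coeff_diff_eq_left: "lead_coeff (p - r) = lead_coeff p"
  using assms degree_add_eq_left[of "- r" p] lead_coeff_add_le[of "- r" p]
  by (auto simp: add.commute)

lemma ind_real_euclid_step:
  fixes p q d r :: "real poly"
  assumes "p \<noteq> 0" and q: "q = d * p - r" and r: "r = 0 \<or> degree r < degree p"
    and "degree p < degree q"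
  shows "ind_real p q = - ind_infty_poly d + ind_real r p"
proof -
  have "q \<noteq> 0"
    using assms(4) by auto
  have "d \<noteq> 0"
    using q r assms(4) by auto
  then have "r = 0 \<or> degree r < degree (d * p)"
    using r \<open>p \<noteq> 0\<close> by (auto simp: degree_mult_eq)
  then have "degree q = degree (d * p)" and "lead_coeff q = lead_coeff (d * p)"
    unfolding q by (rule degree_diff_eq_left, rule lead_coeff_diff_eq_left)
  then have deg: "degree q = degree d + degree p" and lc: "lead_coeff q = lead_coeff d * lead_coeff p"
    using \<open>d \<noteq> 0\<close> \<open>p \<noteq> 0\<close> by (simp add: degree_mult_eq, simp only: lead_coeff_mult)
  have "lead_coeff (p * q) = lead_coeff d * lead_coeff p ^ 2"
    by (simp only: lead_coeff_mult lc power2_eq_square mult_ac)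
  moreover have "sign (lead_coeff p ^ 2) = 1"
    using \<open>p \<noteq> 0\<close> by (simp add: sign_pos)
  ultimately have sign_lc: "sign (lead_coeff (p * q)) = sign (lead_coeff d)"
    by (simp add: sign_mult)
  have "degree (p * q) = degree d + 2 * degree p"
    using \<open>p \<noteq> 0\<close> \<open>q \<noteq> 0\<close> by (simp add: degree_mult_eq deg)
  then have parity: "(-1) ^ degree (p * q) = (-1 :: int) ^ degree d"
    by (simp add: power_add power_mult)
  have "2 * (ind_real p q + ind_real q p) = sign (lead_coeff d) * (1 - (-1) ^ degree d)"
    using sum_sign_jump[of "p * q"] \<open>p \<noteq> 0\<close> \<open>q \<noteq> 0\<close>
    by (simp only: ind_real_add_swap sign_lc parity mult_eq_0_iff simp_thms)
  moreover have "ind_real q p = - ind_real r p"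
    unfolding q by (rule ind_real_mult_diff[OF \<open>p \<noteq> 0\<close>])
  ultimately show ?thesis
    by (cases "even (degree d)") (auto simp: ind_infty_poly_eq)
qed

lemma ind_real_remainder_sequence:
  fixes f d :: "nat \<Rightarrow> real poly"
  assumes deg: "degree (f 1) < degree (f 0)"
    and nz: "\<forall>k\<in>{1..m}. f k \<noteq> 0"
    and step: "\<forall>k\<in>{1..m}. f (k - 1) = d k * f k - f (k + 1)
                  \<and> (f (k + 1) = 0 \<or> degree (f (k + 1)) < degree (f k))"
  shows "ind_real (f 1) (f 0) = - (\<Sum>k=1..m. ind_infty_poly (d k)) + ind_real (f (m + 1)) (f m)"
proof -
  define I where "I k = ind_real (f (Suc k)) (f k)" for k
  have "I (Suc k) - I k = ind_infty_poly (d (Suc k))" if "k < m" for k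
  proof -
    have "f (Suc k) \<noteq> 0"
      using nz that by simp
    moreover have "degree (f (Suc k)) < degree (f k)"
    proof (cases k)
      case 0
      then show ?thesis
        using deg by simp
    next
      case (Suc j)
      then have "f (Suc k) = 0 \<or> degree (f (Suc k)) < degree (f k)"
        using bspec[OF step, of k] that by simp
      then show ?thesis
        using \<open>f (Suc k) \<noteq> 0\<close> by simp
    qed
    moreover have "f k = d (Suc k) * f (Suc k) - f (Suc (Suc k))"
      "f (Suc (Suc k)) = 0 \<or> degree (f (Suc (Suc k))) < degree (f (Suc k))"
      using bspec[OF step, of "Suc k"] that by simp_all
    ultimately show ?thesis
      unfolding I_def by (simp add: ind_real_euclid_step)
  qed
  then have "I m - I 0 = (\<Sum>k=1..m. ind_infty_poly (d k))"
    using sum_Suc_diff'[of 0 m I] by (simp add: sum.atLeast1_atMost_eq atLeast0LessThan)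
  then show ?thesis
    by (simp add: I_def)
qed

theorem theorem60:
  fixes f :: "nat \<Rightarrow> real poly" and d :: "nat \<Rightarrow> real poly" and m :: nat
  assumes f1_nz: "f 1 \<noteq> 0"
    and deg: "degree (f 1) < degree (f 0)"
    and nz: "\<forall>k\<in>{1..m}. f k \<noteq> 0"
    and step: "\<forall>k\<in>{1..m}. f (k - 1) = d k * f k - f (k + 1)
                  \<and> (f (k + 1) = 0 \<or> degree (f (k + 1)) < degree (f k))"
    and last: "f (m + 1) = 0"
  shows "ind_PR (f 1) (f 0) = - (\<Sum>k=1..m. ind_infty_poly (d k))"
proof -
  have "ind_real (f 1) (f 0) = - (\<Sum>k=1..m. ind_infty_poly (d k))"
    using ind_real_remainder_sequence[OF deg nz step] last by (simp add: ind_real_0)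
  moreover have "ind_infty (f 1) (f 0) = 0"
    using deg by (simp add: ind_infty_def Let_def)
  ultimately show ?thesis
    by (simp add: ind_PR_def)
qed

end
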